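(* Assume $\Lambda$ is $b$-dependent for some $b>0$ and $\mathbb{E}[e^{\alpha\Lambda(Q_1)}]<\infty$ for all $\alpha>0$. Let $A\subset\mathbb{R}^d$ be compact, $\alpha>0$, $s_\alpha=\log\mathbb{E}[\exp(\alpha\Lambda(Q_b))]$ and $n=\#\{z\in\mathbb{Z}^d:Q_b(bz)\cap A\neq\emptyset\}$. Then for every $L>0$, $$\log\mathbb{P}(\Lambda(A)\ge L)\le ns_\alpha-2^{-d}\alpha L+d\log 2.$$
   Context: $\Lambda$ is a stationary random locally finite Borel measure on $\mathbb{R}^d$. $Q_a(y)=y+[-a/2,a/2]^d$, $Q_a=Q_a(o)$. $\Lambda$ is $b$-dependent if its restrictions $\Lambda_A,\Lambda_B$ are independent whenever ${\rm dist}(A,B)>b$. *)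

theory Defs
  imports "HOL-Probability.Probability"
begin

definition cube :: "real \<Rightarrow> 'a::euclidean_space \<Rightarrow> 'a set" where
  "cube a y = cbox (y - (a/2) *\<^sub>R One) (y + (a/2) *\<^sub>R One)"

definition lattice :: "'a::euclidean_space set" where
  "lattice = {z. \<forall>i\<in>Basis. z \<bullet> i \<in> \<int>}"

definition random_measure :: "'w measure \<Rightarrow> ('w \<Rightarrow> 'a::euclidean_space measure) \<Rightarrow> bool" where
  "random_measure M Lam \<longleftrightarrow> prob_space M \<and>
     (\<forall>\<omega>\<in>space M. sets (Lam \<omega>) = sets borel \<and>
        (\<forall>K. compact K \<longrightarrow> emeasure (Lam \<omega>) K < \<infinity>)) \<and>
     (\<forall>C\<in>sets borel. (\<lambda>\<omega>. emeasure (Lam \<omega>) C) \<in> borel_measurable M)"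

definition rm_space :: "('a::euclidean_space set \<Rightarrow> ennreal) measure" where
  "rm_space = PiM (sets (borel :: 'a measure)) (\<lambda>_. borel)"

definition restr_rm :: "('w \<Rightarrow> 'a::euclidean_space measure) \<Rightarrow> 'a set \<Rightarrow> 'w \<Rightarrow> ('a set \<Rightarrow> ennreal)" where
  "restr_rm Lam A \<omega> = restrict (\<lambda>C. emeasure (Lam \<omega>) (A \<inter> C)) (sets borel)"

definition shift_rm :: "('w \<Rightarrow> 'a::euclidean_space measure) \<Rightarrow> 'a \<Rightarrow> 'w \<Rightarrow> ('a set \<Rightarrow> ennreal)" where
  "shift_rm Lam y \<omega> = restrict (\<lambda>C. emeasure (Lam \<omega>) ((\<lambda>x. x + y) ` C)) (sets borel)"

definition stationary_rm :: "'w measure \<Rightarrow> ('w \<Rightarrow> 'a::euclidean_space measure) \<Rightarrow> bool" where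
  "stationary_rm M Lam \<longleftrightarrow>
     (\<forall>y. distr M rm_space (shift_rm Lam y) = distr M rm_space (restr_rm Lam UNIV))"

definition b_dependent :: "'w measure \<Rightarrow> ('w \<Rightarrow> 'a::euclidean_space measure) \<Rightarrow> real \<Rightarrow> bool" where
  "b_dependent M Lam b \<longleftrightarrow>
     (\<forall>A B. A \<in> sets borel \<longrightarrow> B \<in> sets borel \<longrightarrow> setdist A B > b \<longrightarrow>
        prob_space.indep_var M rm_space (restr_rm Lam A) rm_space (restr_rm Lam B))"

end

theory Submission
  imports Defs
begin

text \<open>Split the cells \<open>Q\<^sub>b(bz)\<close> meeting \<open>A\<close> into the \<open>2\<^sup>d\<close> classes of equal
  coordinate parity of \<open>z\<close>. Two cells of one class are at distance at least \<open>b\<close>; trimming their upper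
  faces by \<open>\<epsilon>\<close> raises this to \<open>b + \<epsilon>\<close>, so by \<open>b\<close>-dependence the exponential moment
  of \<open>\<Lambda>\<close> on the union of a class factorises, and by stationarity each factor is at most
  \<open>E exp(\<alpha>\<Lambda>(Q\<^sub>b))\<close>; letting \<open>\<epsilon> \<rightarrow> 0\<close> this bound passes to the half-open cells, which
  tile space. As \<open>\<Lambda>(A)\<close> is at most the sum of the \<open>2\<^sup>d\<close> class masses, \<open>\<Lambda>(A) \<ge> L\<close> forces
  some class to carry \<open>2\<^sup>-\<^sup>dL\<close>, and a Chernoff bound for each class plus a union bound give
  the claim.\<close>

section \<open>Lattice cells\<close>

text \<open>Half-open cubes \<open>c + [-a/2, a/2)\<^sup>d\<close> of the lattice \<open>b\<int>\<^sup>d\<close> tile space exactly, so no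
  boundary mass is lost. Trimming only the upper faces leaves a gap of width \<open>e\<close> between two
  cells whose indices differ by two in some coordinate.\<close>

definition hcube :: "real \<Rightarrow> 'a::euclidean_space \<Rightarrow> 'a set" where
  "hcube a c = {x. \<forall>i\<in>Basis. c \<bullet> i - a/2 \<le> x \<bullet> i \<and> x \<bullet> i < c \<bullet> i + a/2}"

definition trimmed_cube :: "real \<Rightarrow> real \<Rightarrow> 'a::euclidean_space \<Rightarrow> 'a set" where
  "trimmed_cube a e c = cbox (c - (a/2) *\<^sub>R One) (c + (a/2 - e) *\<^sub>R One)"

definition lattice_parity :: "'a::euclidean_space \<Rightarrow> 'a \<Rightarrow> bool" where
  "lattice_parity z = (\<lambda>i\<in>Basis. even \<lfloor>z \<bullet> i\<rfloor>)"

definition lattice_cover :: "real \<Rightarrow> 'a::euclidean_space set \<Rightarrow> 'a set" where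
  "lattice_cover b A = {z \<in> lattice. cube b (b *\<^sub>R z) \<inter> A \<noteq> {}}"

lemma mem_cube: "x \<in> cube a c \<longleftrightarrow> (\<forall>i\<in>Basis. c \<bullet> i - a/2 \<le> x \<bullet> i \<and> x \<bullet> i \<le> c \<bullet> i + a/2)"
  unfolding cube_def mem_box by (intro ball_cong refl) (auto simp: inner_simps)

lemma mem_trimmed_cube:
  "x \<in> trimmed_cube a e c \<longleftrightarrow> (\<forall>i\<in>Basis. c \<bullet> i - a/2 \<le> x \<bullet> i \<and> x \<bullet> i \<le> c \<bullet> i + a/2 - e)"
  unfolding trimmed_cube_def mem_box by (intro ball_cong refl) (auto simp: inner_simps)

lemma cube_translate: "cube a c = (\<lambda>x. x + c) ` cube a 0"
proof -
  have "x \<in> cube a c \<longleftrightarrow> x - c \<in> cube a 0" for x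
    unfolding mem_cube by (intro ball_cong refl) (auto simp: inner_simps)
  then show ?thesis
    by (auto simp: image_iff) (metis diff_add_cancel)
qed

lemma compact_cube [simp]: "compact (cube a c)"
  unfolding cube_def by simp

lemma compact_trimmed_cube [simp]: "compact (trimmed_cube a e c)"
  unfolding trimmed_cube_def by simp

lemma cube_in_borel [measurable]: "cube a c \<in> sets borel"
  by (simp add: borel_compact)

lemma trimmed_cube_in_borel [measurable]: "trimmed_cube a e c \<in> sets borel"
  by (simp add: borel_compact)

lemma hcube_subset_cube: "hcube a c \<subseteq> cube a c"
  by (auto simp: hcube_def mem_cube less_imp_le)

lemma trimmed_cube_subset_cube: "0 \<le> e \<Longrightarrow> trimmed_cube a e c \<subseteq> cube a c"
  by (force simp: mem_trimmed_cube mem_cube)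

lemma hcube_eq_UN_trimmed_cube: "hcube a c = (\<Union>k. trimmed_cube a (1 / Suc k) c)"
proof (intro equalityI subsetI)
  fix x assume x: "x \<in> hcube a c"
  define \<delta> where "\<delta> = Min ((\<lambda>i. c \<bullet> i + a/2 - x \<bullet> i) ` Basis)"
  have "0 < \<delta>"
    using x unfolding \<delta>_def hcube_def by (simp add: Min_gr_iff)
  then obtain k where k: "inverse (real (Suc k)) < \<delta>"
    using reals_Archimedean by blast
  have "\<delta> \<le> c \<bullet> i + a/2 - x \<bullet> i" if "i \<in> Basis" for i
    unfolding \<delta>_def using that by (intro Min_le) auto
  then have "x \<in> trimmed_cube a (1 / Suc k) c"
    using x k by (force simp: mem_trimmed_cube hcube_def inverse_eq_divide)
  then show "x \<in> (\<Union>k. trimmed_cube a (1 / Suc k) c)" by blast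
next
  fix x assume "x \<in> (\<Union>k. trimmed_cube a (1 / Suc k) c)"
  then obtain k where "x \<in> trimmed_cube a (1 / Suc k) c" by blast
  moreover have "0 < 1 / real (Suc k)" by simp
  ultimately show "x \<in> hcube a c"
    unfolding mem_trimmed_cube hcube_def by (smt (verit) mem_Collect_eq)
qed

lemma hcube_in_borel [measurable]: "hcube a c \<in> sets borel"
  unfolding hcube_eq_UN_trimmed_cube
  by (intro sets.countable_UN image_subsetI trimmed_cube_in_borel)

lemma incseq_trimmed_cube: "incseq (\<lambda>k. trimmed_cube a (1 / Suc k) c)"
proof (rule incseq_SucI)
  fix k
  have "1 / real (Suc (Suc k)) \<le> 1 / Suc k"
    by (simp add: frac_le)
  then show "trimmed_cube a (1 / Suc k) c \<subseteq> trimmed_cube a (1 / Suc (Suc k)) c"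
    by (force simp: mem_trimmed_cube)
qed

lemma lattice_hcube_cover:
  assumes "b > 0"
  obtains z where "z \<in> lattice" "x \<in> hcube b (b *\<^sub>R z)"
proof
  define z :: 'a where "z = (\<Sum>i\<in>Basis. of_int \<lfloor>x \<bullet> i / b + 1/2\<rfloor> *\<^sub>R i)"
  have zi: "z \<bullet> i = of_int \<lfloor>x \<bullet> i / b + 1/2\<rfloor>" if "i \<in> Basis" for i
    using that by (simp add: z_def inner_sum_left inner_Basis if_distrib cong: if_cong)
  then show "z \<in> lattice"
    by (simp add: lattice_def)
  have "b * (z \<bullet> i) - b/2 \<le> x \<bullet> i \<and> x \<bullet> i < b * (z \<bullet> i) + b/2" if "i \<in> Basis" for i
  proof -
    have "z \<bullet> i \<le> x \<bullet> i / b + 1/2" "x \<bullet> i / b + 1/2 < z \<bullet> i + 1"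
      using zi[OF that] by linarith+
    then show ?thesis
      using assms by (simp add: field_simps)
  qed
  then show "x \<in> hcube b (b *\<^sub>R z)"
    by (simp add: hcube_def)
qed

lemma finite_lattice_box:
  "finite {z::'a::euclidean_space. z \<in> lattice \<and> (\<forall>i\<in>Basis. \<bar>z \<bullet> i\<bar> \<le> K)}"
proof (rule inj_on_finite)
  let ?f = "\<lambda>z::'a. \<lambda>i\<in>Basis. \<lfloor>z \<bullet> i\<rfloor>"
  show "inj_on ?f {z. z \<in> lattice \<and> (\<forall>i\<in>Basis. \<bar>z \<bullet> i\<bar> \<le> K)}"
  proof (rule inj_onI, rule euclidean_eqI)
    fix x y i :: 'a
    assume "x \<in> {z. z \<in> lattice \<and> (\<forall>i\<in>Basis. \<bar>z \<bullet> i\<bar> \<le> K)}"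
      "y \<in> {z. z \<in> lattice \<and> (\<forall>i\<in>Basis. \<bar>z \<bullet> i\<bar> \<le> K)}" "?f x = ?f y" "i \<in> Basis"
    then show "x \<bullet> i = y \<bullet> i"
      by (auto simp: lattice_def dest!: fun_cong[of _ _ i] elim!: Ints_cases)
  qed
  show "?f ` {z. z \<in> lattice \<and> (\<forall>i\<in>Basis. \<bar>z \<bullet> i\<bar> \<le> K)} \<subseteq> PiE Basis (\<lambda>_. {-\<lceil>K\<rceil>..\<lceil>K\<rceil>})"
  proof (intro image_subsetI PiE_I)
    fix z i :: 'a assume z: "z \<in> {z. z \<in> lattice \<and> (\<forall>i\<in>Basis. \<bar>z \<bullet> i\<bar> \<le> K)}" and i: "i \<in> Basis"
    then have "\<bar>z \<bullet> i\<bar> \<le> K" by blast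
    then show "?f z i \<in> {-\<lceil>K\<rceil>..\<lceil>K\<rceil>}"
      using i le_of_int_ceiling[of K] by (simp add: le_floor_iff floor_le_iff abs_le_iff) linarith
  qed auto
qed (intro finite_PiE; auto)

lemma finite_lattice_cover:
  assumes "compact A" "b > 0"
  shows "finite (lattice_cover b A)"
proof -
  obtain R where R: "\<And>x. x \<in> A \<Longrightarrow> norm x \<le> R"
    using compact_imp_bounded[OF assms(1)] bounded_iff by blast
  have "\<bar>z \<bullet> i\<bar> \<le> (R + b/2) / b"
    if "x \<in> cube b (b *\<^sub>R z)" "x \<in> A" "i \<in> Basis" for z x i :: 'a
  proof -
    have "b * (z \<bullet> i) - b/2 \<le> x \<bullet> i" "x \<bullet> i \<le> b * (z \<bullet> i) + b/2"
      using that by (auto simp: mem_cube)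
    moreover have "\<bar>x \<bullet> i\<bar> \<le> R"
      using R[OF that(2)] Basis_le_norm[OF that(3), of x] by linarith
    ultimately have "\<bar>b * (z \<bullet> i)\<bar> \<le> R + b/2" by arith
    then show ?thesis
      using assms(2) by (simp add: abs_mult field_simps)
  qed
  then have "{z \<in> lattice. cube b (b *\<^sub>R z) \<inter> A \<noteq> {}}
      \<subseteq> {z. z \<in> lattice \<and> (\<forall>i\<in>Basis. \<bar>z \<bullet> i\<bar> \<le> (R + b/2) / b)}"
    by blast
  then show ?thesis
    unfolding lattice_cover_def by (rule finite_subset) (rule finite_lattice_box)
qed

lemma subset_UN_lattice_cover:
  assumes "b > 0"
  shows "A \<subseteq> (\<Union>z\<in>lattice_cover b A. hcube b (b *\<^sub>R z))"
proof
  fix x assume "x \<in> A"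
  obtain z where "z \<in> lattice" "x \<in> hcube b (b *\<^sub>R z)"
    using lattice_hcube_cover[OF assms] .
  with \<open>x \<in> A\<close> show "x \<in> (\<Union>z\<in>lattice_cover b A. hcube b (b *\<^sub>R z))"
    using hcube_subset_cube unfolding lattice_cover_def by blast
qed

lemma lattice_parity_separated:
  assumes "z \<in> lattice" "z' \<in> lattice" "z \<noteq> z'" "lattice_parity z = lattice_parity z'"
  obtains i where "i \<in> Basis" "2 \<le> \<bar>z \<bullet> i - z' \<bullet> i\<bar>"
proof -
  obtain i where i: "i \<in> Basis" "z \<bullet> i \<noteq> z' \<bullet> i"
    using assms(3) euclidean_eqI by blast
  have "z \<bullet> i \<in> \<int>" "z' \<bullet> i \<in> \<int>"
    using assms(1,2) i(1) by (auto simp: lattice_def)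
  then obtain m m' where m: "z \<bullet> i = of_int m" "z' \<bullet> i = of_int m'"
    by (metis Ints_cases)
  have "even m = even m'"
    using fun_cong[OF assms(4), of i] i(1) m by (simp add: lattice_parity_def)
  moreover have "m \<noteq> m'" using i(2) m by auto
  ultimately have "2 \<le> \<bar>m - m'\<bar>" by presburger
  then have "2 \<le> \<bar>z \<bullet> i - z' \<bullet> i\<bar>"
    unfolding m by (metis of_int_abs of_int_diff of_int_le_iff of_int_numeral)
  with i(1) show thesis by (rule that)
qed

lemma dist_trimmed_cubes:
  assumes "b > 0" "z \<in> lattice" "z' \<in> lattice" "z \<noteq> z'" "lattice_parity z = lattice_parity z'"
    and "x \<in> trimmed_cube b e (b *\<^sub>R z)" "y \<in> trimmed_cube b e (b *\<^sub>R z')"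
  shows "b + e \<le> dist x y"
proof -
  obtain i where i: "i \<in> Basis" "2 \<le> \<bar>z \<bullet> i - z' \<bullet> i\<bar>"
    using lattice_parity_separated[OF assms(2-5)] .
  have "b * 2 \<le> b * \<bar>z \<bullet> i - z' \<bullet> i\<bar>"
    using i(2) assms(1) by (intro mult_left_mono) auto
  moreover have "\<bar>b * (z \<bullet> i) - b * (z' \<bullet> i)\<bar> = b * \<bar>z \<bullet> i - z' \<bullet> i\<bar>"
    using assms(1) by (simp add: abs_mult flip: right_diff_distrib)
  ultimately have "2 * b \<le> \<bar>b * (z \<bullet> i) - b * (z' \<bullet> i)\<bar>"
    by linarith
  moreover have "b * (z \<bullet> i) - b/2 \<le> x \<bullet> i" "x \<bullet> i \<le> b * (z \<bullet> i) + b/2 - e"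
    "b * (z' \<bullet> i) - b/2 \<le> y \<bullet> i" "y \<bullet> i \<le> b * (z' \<bullet> i) + b/2 - e"
    using assms(6,7) i(1) by (auto simp: mem_trimmed_cube)
  ultimately have "b + e \<le> \<bar>(x - y) \<bullet> i\<bar>"
    by (auto simp: inner_diff_left abs_le_iff abs_if split: if_splits)
  also have "\<dots> \<le> dist x y"
    unfolding dist_norm by (rule Basis_le_norm[OF i(1)])
  finally show ?thesis .
qed

lemma translate_in_borel:
  fixes C :: "'a::euclidean_space set"
  assumes "C \<in> sets borel"
  shows "(\<lambda>x. x + y) ` C \<in> sets borel"
proof -
  have "(\<lambda>x. x + y) ` C = (\<lambda>x. x - y) -` C \<inter> space borel"
    by (auto simp: image_iff) (metis diff_add_cancel)
  also have "\<dots> \<in> sets borel"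
    by (rule measurable_sets[OF _ assms]) simp
  finally show ?thesis .
qed

lemma borel_measurable_eval_rm_space:
  assumes "C \<in> sets (borel :: 'a::euclidean_space measure)" "g \<in> borel_measurable borel"
  shows "(\<lambda>f. g (f C)) \<in> borel_measurable (rm_space :: ('a set \<Rightarrow> ennreal) measure)"
  unfolding rm_space_def
  using measurable_compose[OF measurable_component_singleton[OF assms(1)] assms(2)] .

lemma (in prob_space) indep_var_nn_integral:
  fixes X Y :: "'a \<Rightarrow> ennreal"
  assumes "indep_var borel X borel Y"
  shows "(\<integral>\<^sup>+\<omega>. X \<omega> * Y \<omega> \<partial>M) = (\<integral>\<^sup>+\<omega>. X \<omega> \<partial>M) * (\<integral>\<^sup>+\<omega>. Y \<omega> \<partial>M)"
proof -
  have "(\<lambda>_::bool. borel) = case_bool borel borel"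
    by (simp add: fun_eq_iff split: bool.split)
  then have "indep_vars (\<lambda>_. borel) (case_bool X Y) UNIV"
    using assms unfolding indep_var_def by metis
  from indep_vars_nn_integral[OF _ this] show ?thesis
    by (simp add: UNIV_bool mult.commute)
qed

lemma exp_mult_sum_le:
  fixes X :: "'b \<Rightarrow> real" and \<beta> :: real
  assumes "finite F" "0 \<le> \<beta>"
  shows "exp (\<beta> * (\<Sum>z\<in>F. X z)) \<le> 1 + (\<Sum>z\<in>F. exp (card F * \<beta> * X z))"
proof (cases "F = {}")
  case False
  obtain z0 where z0: "z0 \<in> F" "Max (X ` F) = X z0"
    using obtains_MAX[OF assms(1) False] by metis
  have "X z \<le> X z0" if "z \<in> F" for z
    using Max_ge[of "X ` F" "X z"] assms(1) that z0(2) by simp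
  then have "(\<Sum>z\<in>F. X z) \<le> (\<Sum>z\<in>F. X z0)"
    by (rule sum_mono)
  then have "(\<Sum>z\<in>F. X z) \<le> card F * X z0"
    by simp
  then have "\<beta> * (\<Sum>z\<in>F. X z) \<le> card F * \<beta> * X z0"
    using mult_left_mono[OF _ assms(2)] by (metis mult.assoc mult.commute)
  then have "exp (\<beta> * (\<Sum>z\<in>F. X z)) \<le> exp (card F * \<beta> * X z0)"
    by simp
  also have "\<dots> \<le> (\<Sum>z\<in>F. exp (card F * \<beta> * X z))"
    by (rule member_le_sum[OF z0(1)]) (auto simp: assms(1))
  finally show ?thesis by simp
qed simp

lemma mult_exp_power_eq_exp_ln:
  fixes E x :: real
  assumes "0 < E"
  shows "2 ^ d * exp (- x) * E ^ n = exp (real n * ln E - x + real d * ln 2)"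
proof -
  have "exp (real n * ln E - x + real d * ln 2) = exp (real d * ln 2) * exp (- x) * exp (real n * ln E)"
    unfolding exp_add[symmetric] by simp
  also have "\<dots> = 2 ^ d * exp (- x) * E ^ n"
    using assms by (simp add: exp_of_nat_mult)
  finally show ?thesis ..
qed

lemma (in prob_space) emeasure_le_sum_pigeonhole:
  fixes X :: "'a \<Rightarrow> real" and Y :: "'b \<Rightarrow> 'a \<Rightarrow> real"
  assumes P: "finite P" "P \<noteq> {}" and Y [measurable]: "\<And>p. Y p \<in> borel_measurable M"
    and le: "\<And>\<omega>. \<omega> \<in> space M \<Longrightarrow> X \<omega> \<le> (\<Sum>p\<in>P. Y p \<omega>)"
  shows "emeasure M {\<omega> \<in> space M. t \<le> X \<omega>} \<le> (\<Sum>p\<in>P. emeasure M {\<omega> \<in> space M. t / card P \<le> Y p \<omega>})"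
proof -
  have "{\<omega> \<in> space M. t \<le> X \<omega>} \<subseteq> (\<Union>p\<in>P. {\<omega> \<in> space M. t / card P \<le> Y p \<omega>})"
  proof safe
    fix \<omega> assume \<omega>: "\<omega> \<in> space M" "t \<le> X \<omega>"
    show "\<omega> \<in> (\<Union>p\<in>P. {\<omega> \<in> space M. t / card P \<le> Y p \<omega>})"
    proof (rule ccontr)
      assume "\<omega> \<notin> (\<Union>p\<in>P. {\<omega> \<in> space M. t / card P \<le> Y p \<omega>})"
      then have "(\<Sum>p\<in>P. Y p \<omega>) < (\<Sum>p\<in>P. t / card P)"
        using \<omega>(1) P by (intro sum_strict_mono) auto
      also have "\<dots> = t"
        using P by simp
      finally show False
        using le[OF \<omega>(1)] \<omega>(2) by linarith
    qed
  qed
  then have "emeasure M {\<omega> \<in> space M. t \<le> X \<omega>} \<le> emeasure M (\<Union>p\<in>P. {\<omega> \<in> space M. t / card P \<le> Y p \<omega>})"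
    by (rule emeasure_mono) (rule sets.finite_UN[OF P(1)], measurable)
  also have "\<dots> \<le> (\<Sum>p\<in>P. emeasure M {\<omega> \<in> space M. t / card P \<le> Y p \<omega>})"
    using P by (intro emeasure_subadditive_finite) auto
  finally show ?thesis .
qed

section \<open>Exponential moments of a random measure\<close>

locale random_measure_on = prob_space M for M :: "'w measure" +
  fixes Lam :: "'w \<Rightarrow> 'a::euclidean_space measure"
  assumes random_measure: "random_measure M Lam"
begin

lemma sets_Lam: "\<omega> \<in> space M \<Longrightarrow> sets (Lam \<omega>) = sets borel"
  using random_measure by (simp add: random_measure_def)

lemma emeasure_Lam_less_top:
  assumes "\<omega> \<in> space M" "compact K" "C \<subseteq> K"
  shows "emeasure (Lam \<omega>) C < \<infinity>"
proof -
  have "emeasure (Lam \<omega>) C \<le> emeasure (Lam \<omega>) K"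
    using assms sets_Lam by (intro emeasure_mono) (auto intro: borel_compact)
  also have "\<dots> < \<infinity>"
    using random_measure assms(1,2) by (simp add: random_measure_def)
  finally show ?thesis .
qed

lemma borel_measurable_emeasure_Lam [measurable]:
  "C \<in> sets borel \<Longrightarrow> (\<lambda>\<omega>. emeasure (Lam \<omega>) C) \<in> borel_measurable M"
  using random_measure by (simp add: random_measure_def)

lemma borel_measurable_measure_Lam [measurable]:
  "C \<in> sets borel \<Longrightarrow> (\<lambda>\<omega>. measure (Lam \<omega>) C) \<in> borel_measurable M"
  unfolding measure_def by (intro borel_measurable_enn2real borel_measurable_emeasure_Lam)

lemma restr_rm_measurable: "A \<in> sets borel \<Longrightarrow> restr_rm Lam A \<in> measurable M rm_space"
  unfolding rm_space_def restr_rm_def by (rule measurable_PiM_single') auto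

lemma shift_rm_measurable: "shift_rm Lam y \<in> measurable M rm_space"
  unfolding rm_space_def shift_rm_def
  by (rule measurable_PiM_single') (auto intro!: borel_measurable_emeasure_Lam translate_in_borel)

lemma nn_integral_emeasure_Lam_translate:
  assumes stat: "stationary_rm M Lam" and C: "C \<in> sets borel" and g: "g \<in> borel_measurable borel"
  shows "(\<integral>\<^sup>+\<omega>. g (emeasure (Lam \<omega>) ((\<lambda>x. x + y) ` C)) \<partial>M) = (\<integral>\<^sup>+\<omega>. g (emeasure (Lam \<omega>) C) \<partial>M)"
proof -
  have "(\<integral>\<^sup>+\<omega>. g (emeasure (Lam \<omega>) ((\<lambda>x. x + y) ` C)) \<partial>M) = (\<integral>\<^sup>+\<omega>. g (shift_rm Lam y \<omega> C) \<partial>M)"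
    using C by (simp add: shift_rm_def)
  also have "\<dots> = (\<integral>\<^sup>+f. g (f C) \<partial>distr M rm_space (shift_rm Lam y))"
    using shift_rm_measurable borel_measurable_eval_rm_space[OF C g] by (simp add: nn_integral_distr)
  also have "\<dots> = (\<integral>\<^sup>+f. g (f C) \<partial>distr M rm_space (restr_rm Lam UNIV))"
    using stat unfolding stationary_rm_def by simp
  also have "\<dots> = (\<integral>\<^sup>+\<omega>. g (restr_rm Lam UNIV \<omega> C) \<partial>M)"
    using restr_rm_measurable[of UNIV] borel_measurable_eval_rm_space[OF C g]
    by (simp add: nn_integral_distr)
  also have "\<dots> = (\<integral>\<^sup>+\<omega>. g (emeasure (Lam \<omega>) C) \<partial>M)"
    using C by (simp add: restr_rm_def)
  finally show ?thesis .
qed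

lemma indep_var_emeasure_Lam:
  assumes "b_dependent M Lam b" "C \<in> sets borel" "D \<in> sets borel" "b < setdist C D"
  shows "indep_var borel (\<lambda>\<omega>. emeasure (Lam \<omega>) C) borel (\<lambda>\<omega>. emeasure (Lam \<omega>) D)"
proof -
  have "indep_var rm_space (restr_rm Lam C) rm_space (restr_rm Lam D)"
    using assms unfolding b_dependent_def by blast
  then have "indep_var borel ((\<lambda>f. f UNIV) \<circ> restr_rm Lam C) borel ((\<lambda>f. f UNIV) \<circ> restr_rm Lam D)"
    by (rule indep_var_compose) (auto intro: borel_measurable_eval_rm_space)
  then show ?thesis
    by (simp add: restr_rm_def o_def)
qed

text \<open>The paper's \<open>s\<^sub>\<alpha>\<close> is \<open>ln (exp_moment \<alpha> (cube b 0))\<close>.\<close>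

definition exp_moment :: "real \<Rightarrow> 'a set \<Rightarrow> ennreal" where
  "exp_moment \<alpha> C = (\<integral>\<^sup>+\<omega>. ennreal (exp (\<alpha> * measure (Lam \<omega>) C)) \<partial>M)"

lemma borel_measurable_exp_measure_Lam [measurable]:
  assumes "C \<in> sets borel"
  shows "(\<lambda>\<omega>. ennreal (exp (\<alpha> * measure (Lam \<omega>) C))) \<in> borel_measurable M"
  by (rule measurable_compose[OF borel_measurable_measure_Lam[OF assms]]) measurable

lemma measure_Lam_mono:
  assumes "\<omega> \<in> space M" "C \<in> sets borel" "D \<in> sets borel" "C \<subseteq> D" "compact K" "D \<subseteq> K"
  shows "measure (Lam \<omega>) C \<le> measure (Lam \<omega>) D"
  using assms sets_Lam emeasure_Lam_less_top
  by (intro measure_mono_fmeasurable) (auto simp: fmeasurable_def)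

lemma measure_Lam_le_sum:
  assumes "\<omega> \<in> space M" "finite I" "A \<in> sets borel" "A \<subseteq> (\<Union>i\<in>I. C i)"
    and "\<And>i. i \<in> I \<Longrightarrow> C i \<in> sets borel" "compact K" "\<And>i. i \<in> I \<Longrightarrow> C i \<subseteq> K"
  shows "measure (Lam \<omega>) A \<le> (\<Sum>i\<in>I. measure (Lam \<omega>) (C i))"
proof -
  have "measure (Lam \<omega>) A \<le> measure (Lam \<omega>) (\<Union>i\<in>I. C i)"
    using assms by (intro measure_Lam_mono[where K = K]) auto
  also have "\<dots> \<le> (\<Sum>i\<in>I. measure (Lam \<omega>) (C i))"
    using assms sets_Lam emeasure_Lam_less_top
    by (intro measure_subadditive_finite) (auto simp: less_top)
  finally show ?thesis .
qed

lemma exp_moment_translate: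
  assumes "stationary_rm M Lam" "C \<in> sets borel"
  shows "exp_moment \<alpha> ((\<lambda>x. x + y) ` C) = exp_moment \<alpha> C"
  unfolding exp_moment_def measure_def
  by (rule nn_integral_emeasure_Lam_translate[OF assms, of "\<lambda>x. ennreal (exp (\<alpha> * enn2real x))"])
    measurable

lemma exp_moment_cube:
  assumes "stationary_rm M Lam"
  shows "exp_moment \<alpha> (cube a c) = exp_moment \<alpha> (cube a 0)"
  by (metis assms cube_translate exp_moment_translate cube_in_borel)

lemma exp_moment_empty: "exp_moment \<alpha> {} = 1"
  by (simp add: exp_moment_def emeasure_space_1)

lemma one_le_exp_moment:
  assumes "0 \<le> \<alpha>"
  shows "1 \<le> exp_moment \<alpha> C"
proof -
  have "(1::ennreal) = (\<integral>\<^sup>+\<omega>. 1 \<partial>M)"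
    by (simp add: emeasure_space_1)
  also have "\<dots> \<le> exp_moment \<alpha> C"
    unfolding exp_moment_def using assms by (intro nn_integral_mono) simp
  finally show ?thesis .
qed

lemma exp_moment_mono:
  assumes "0 \<le> \<alpha>" "C \<in> sets borel" "compact D" "C \<subseteq> D"
  shows "exp_moment \<alpha> C \<le> exp_moment \<alpha> D"
  unfolding exp_moment_def using assms
  by (intro nn_integral_mono ennreal_leI)
    (auto intro!: mult_left_mono measure_Lam_mono[where K = D] borel_compact)

lemma exp_moment_finite:
  assumes stat: "stationary_rm M Lam" and mom: "\<And>\<beta>. 0 < \<beta> \<Longrightarrow> exp_moment \<beta> (cube 1 0) < \<infinity>"
    and K: "compact K" and \<beta>: "0 < \<beta>"
  shows "exp_moment \<beta> K < \<infinity>"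
proof -
  define F where "F = lattice_cover 1 K"
  define k where "k = real (card F)"
  have F: "finite F"
    unfolding F_def by (rule finite_lattice_cover[OF K]) simp
  have "K \<subseteq> (\<Union>z\<in>F. hcube 1 (1 *\<^sub>R z))"
    unfolding F_def by (rule subset_UN_lattice_cover) simp
  also have "\<dots> \<subseteq> (\<Union>z\<in>F. cube 1 z)"
    by (intro UN_mono order_refl) (simp add: hcube_subset_cube)
  finally have K_cover: "K \<subseteq> (\<Union>z\<in>F. cube 1 z)" .
  have bound: "ennreal (exp (\<beta> * measure (Lam \<omega>) K))
      \<le> 1 + (\<Sum>z\<in>F. ennreal (exp (k * \<beta> * measure (Lam \<omega>) (cube 1 z))))"
    if "\<omega> \<in> space M" for \<omega>
  proof -
    have "measure (Lam \<omega>) K \<le> (\<Sum>z\<in>F. measure (Lam \<omega>) (cube 1 z))"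
      using that F K K_cover
      by (intro measure_Lam_le_sum[where K = "\<Union>z\<in>F. cube 1 z"]) (auto intro: borel_compact)
    then have "exp (\<beta> * measure (Lam \<omega>) K) \<le> exp (\<beta> * (\<Sum>z\<in>F. measure (Lam \<omega>) (cube 1 z)))"
      using \<beta> by simp
    also have "\<dots> \<le> 1 + (\<Sum>z\<in>F. exp (k * \<beta> * measure (Lam \<omega>) (cube 1 z)))"
      unfolding k_def using F \<beta> by (intro exp_mult_sum_le) auto
    finally have "ennreal (exp (\<beta> * measure (Lam \<omega>) K))
        \<le> ennreal (1 + (\<Sum>z\<in>F. exp (k * \<beta> * measure (Lam \<omega>) (cube 1 z))))"
      by (rule ennreal_leI)
    then show ?thesis
      by (simp add: ennreal_plus sum_nonneg)
  qed
  have "exp_moment \<beta> K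
      \<le> (\<integral>\<^sup>+\<omega>. 1 + (\<Sum>z\<in>F. ennreal (exp (k * \<beta> * measure (Lam \<omega>) (cube 1 z)))) \<partial>M)"
    unfolding exp_moment_def by (intro nn_integral_mono bound)
  also have "\<dots> = 1 + (\<Sum>z\<in>F. exp_moment (k * \<beta>) (cube 1 z))"
    unfolding exp_moment_def
    by (subst nn_integral_add, measurable, subst nn_integral_sum, measurable)
      (simp add: emeasure_space_1)
  also have "\<dots> = 1 + (\<Sum>z\<in>F. exp_moment (k * \<beta>) (cube 1 0))"
    by (intro arg_cong[where f = "(+) 1"] sum.cong refl exp_moment_cube[OF stat])
  also have "\<dots> < \<infinity>"
  proof (cases "F = {}")
    case False
    then have "0 < k * \<beta>"
      using F \<beta> by (simp add: k_def card_gt_0_iff)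
    from mom[OF this] show ?thesis
      by (simp add: ennreal_mult_less_top of_nat_less_top)
  qed simp
  finally show ?thesis .
qed

lemma exp_moment_Un:
  assumes dep: "b_dependent M Lam b" and "0 \<le> b" "b < \<delta>"
    and C: "compact C" and D: "compact D" and sep: "\<And>x y. x \<in> C \<Longrightarrow> y \<in> D \<Longrightarrow> \<delta> \<le> dist x y"
  shows "exp_moment \<alpha> (C \<union> D) = exp_moment \<alpha> C * exp_moment \<alpha> D"
proof (cases "C = {} \<or> D = {}")
  case True
  then show ?thesis by (auto simp: exp_moment_empty)
next
  case False
  have borel: "C \<in> sets borel" "D \<in> sets borel"
    using C D by (auto intro: borel_compact)
  have "\<delta> \<le> setdist C D"
    using False sep by (intro le_setdistI) auto
  then have far: "b < setdist C D"
    using assms(3) by linarith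
  have disj: "C \<inter> D = {}"
    using sep assms(2,3) by fastforce
  define g where "g x = ennreal (exp (\<alpha> * enn2real x))" for x :: ennreal
  have g_emeasure: "g (emeasure (Lam \<omega>) X) = ennreal (exp (\<alpha> * measure (Lam \<omega>) X))" for \<omega> X
    by (simp add: g_def measure_def)
  have g: "g \<in> borel_measurable borel"
    unfolding g_def by measurable
  have "indep_var borel (g \<circ> (\<lambda>\<omega>. emeasure (Lam \<omega>) C)) borel (g \<circ> (\<lambda>\<omega>. emeasure (Lam \<omega>) D))"
    by (rule indep_var_compose[OF indep_var_emeasure_Lam[OF dep borel far] g g])
  then have "exp_moment \<alpha> C * exp_moment \<alpha> D
      = (\<integral>\<^sup>+\<omega>. ennreal (exp (\<alpha> * measure (Lam \<omega>) C)) * ennreal (exp (\<alpha> * measure (Lam \<omega>) D)) \<partial>M)"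
    by (simp add: indep_var_nn_integral exp_moment_def g_emeasure o_def)
  also have "\<dots> = exp_moment \<alpha> (C \<union> D)"
    unfolding exp_moment_def
  proof (rule nn_integral_cong)
    fix \<omega> assume \<omega>: "\<omega> \<in> space M"
    have "measure (Lam \<omega>) (C \<union> D) = measure (Lam \<omega>) C + measure (Lam \<omega>) D"
      using emeasure_Lam_less_top[OF \<omega> C order_refl] emeasure_Lam_less_top[OF \<omega> D order_refl]
        sets_Lam[OF \<omega>] borel disj
      by (intro measure_Union) simp_all
    then show "ennreal (exp (\<alpha> * measure (Lam \<omega>) C)) * ennreal (exp (\<alpha> * measure (Lam \<omega>) D))
        = ennreal (exp (\<alpha> * measure (Lam \<omega>) (C \<union> D)))"
      by (simp add: distrib_left exp_add ennreal_mult)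
  qed
  finally show ?thesis ..
qed

lemma exp_moment_UN:
  assumes dep: "b_dependent M Lam b" and "0 \<le> b" "b < \<delta>" and "finite G"
    and "\<And>z. z \<in> G \<Longrightarrow> compact (C z)"
    and "\<And>z z' x y. z \<in> G \<Longrightarrow> z' \<in> G \<Longrightarrow> z \<noteq> z' \<Longrightarrow> x \<in> C z \<Longrightarrow> y \<in> C z' \<Longrightarrow> \<delta> \<le> dist x y"
  shows "exp_moment \<alpha> (\<Union>z\<in>G. C z) = (\<Prod>z\<in>G. exp_moment \<alpha> (C z))"
  using assms(4-)
proof (induction G rule: finite_induct)
  case empty
  then show ?case by (simp add: exp_moment_empty)
next
  case (insert z G)
  have IH: "exp_moment \<alpha> (\<Union>z\<in>G. C z) = (\<Prod>z\<in>G. exp_moment \<alpha> (C z))"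
    by (intro insert.IH) (auto intro: insert.prems)
  have "exp_moment \<alpha> (C z \<union> (\<Union>z'\<in>G. C z')) = exp_moment \<alpha> (C z) * exp_moment \<alpha> (\<Union>z'\<in>G. C z')"
  proof (rule exp_moment_Un[OF dep assms(2,3)])
    show "compact (C z)" "compact (\<Union>z'\<in>G. C z')"
      using insert by (auto intro!: compact_UN)
    show "\<delta> \<le> dist x y" if "x \<in> C z" "y \<in> (\<Union>z'\<in>G. C z')" for x y
      using that insert.hyps(2) insert.prems(2) by fastforce
  qed
  then show ?case
    using insert.hyps IH by simp
qed

lemma exp_moment_SUP:
  assumes "0 \<le> \<alpha>" "incseq C" "\<And>k. C k \<in> sets borel" "compact K" "\<And>k. C k \<subseteq> K"
  shows "exp_moment \<alpha> (\<Union>k. C k) = (SUP k. exp_moment \<alpha> (C k))"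
proof -
  define f where "f k \<omega> = ennreal (exp (\<alpha> * measure (Lam \<omega>) (C k)))" for k \<omega>
  have f_mono: "f k \<omega> \<le> f k' \<omega>" if "\<omega> \<in> space M" "k \<le> k'" for \<omega> k k'
    unfolding f_def using that assms monoD[OF assms(2) that(2)]
    by (intro ennreal_leI exp_mono mult_left_mono measure_Lam_mono[where K = K]) auto
  have "exp_moment \<alpha> (\<Union>k. C k) = (\<integral>\<^sup>+\<omega>. (SUP k. f k \<omega>) \<partial>M)"
    unfolding exp_moment_def
  proof (rule nn_integral_cong)
    fix \<omega> assume \<omega>: "\<omega> \<in> space M"
    have "(\<Union>k. C k) \<subseteq> K"
      using assms(5) by blast
    from emeasure_Lam_less_top[OF \<omega> assms(4) this]
    have "emeasure (Lam \<omega>) (\<Union>k. C k) \<noteq> \<infinity>"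
      by simp
    then have "(\<lambda>k. measure (Lam \<omega>) (C k)) \<longlonglongrightarrow> measure (Lam \<omega>) (\<Union>k. C k)"
      using assms(2,3) sets_Lam[OF \<omega>] by (intro Lim_measure_incseq) auto
    then have "(\<lambda>k. f k \<omega>) \<longlonglongrightarrow> ennreal (exp (\<alpha> * measure (Lam \<omega>) (\<Union>k. C k)))"
      unfolding f_def by (intro tendsto_ennrealI tendsto_intros)
    moreover have "(\<lambda>k. f k \<omega>) \<longlonglongrightarrow> (SUP k. f k \<omega>)"
      using f_mono[OF \<omega>] by (intro LIMSEQ_SUP) (simp add: incseq_def)
    ultimately show "ennreal (exp (\<alpha> * measure (Lam \<omega>) (\<Union>k. C k))) = (SUP k. f k \<omega>)"
      by (rule LIMSEQ_unique)
  qed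
  also have "\<dots> = (SUP k. exp_moment \<alpha> (C k))"
    unfolding exp_moment_def f_def[abs_def] using f_mono assms(3)
    by (intro nn_integral_monotone_convergence_SUP_AE AE_I2) (simp_all add: f_def)
  finally show ?thesis .
qed

lemma exp_moment_eq_integral:
  assumes "C \<in> sets borel" "exp_moment \<alpha> C < \<infinity>"
  shows "exp_moment \<alpha> C = ennreal (\<integral>\<omega>. exp (\<alpha> * measure (Lam \<omega>) C) \<partial>M)"
  using assms unfolding exp_moment_def
  by (intro nn_integral_eq_integral integrableI_nonneg) auto

lemma Chernoff_ineq_measure_Lam_ge:
  assumes "0 < \<alpha>" "C \<in> sets borel"
  shows "emeasure M {\<omega> \<in> space M. t \<le> measure (Lam \<omega>) C} \<le> ennreal (exp (- \<alpha> * t)) * exp_moment \<alpha> C"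
proof -
  have "emeasure M {\<omega> \<in> space M. t \<le> measure (Lam \<omega>) C}
      \<le> ennreal (exp (- \<alpha> * t)) * (\<integral>\<^sup>+\<omega>. ennreal (exp (\<alpha> * measure (Lam \<omega>) C)) * indicator (space M) \<omega> \<partial>M)"
    using assms by (intro Chernoff_ineq_nn_integral_ge) auto
  also have "(\<integral>\<^sup>+\<omega>. ennreal (exp (\<alpha> * measure (Lam \<omega>) C)) * indicator (space M) \<omega> \<partial>M) = exp_moment \<alpha> C"
    unfolding exp_moment_def by (intro nn_integral_cong) simp
  finally show ?thesis .
qed

lemma exp_moment_lattice_class:
  assumes stat: "stationary_rm M Lam" and dep: "b_dependent M Lam b" and b: "0 < b" and \<alpha>: "0 \<le> \<alpha>"
    and G: "finite G" "G \<subseteq> lattice" and par: "\<And>z. z \<in> G \<Longrightarrow> lattice_parity z = p"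
  shows "exp_moment \<alpha> (\<Union>z\<in>G. hcube b (b *\<^sub>R z)) \<le> exp_moment \<alpha> (cube b 0) ^ card G"
proof -
  define W where "W k = (\<Union>z\<in>G. trimmed_cube b (1 / Suc k) (b *\<^sub>R z))" for k
  have "(\<Union>z\<in>G. hcube b (b *\<^sub>R z)) = (\<Union>k. W k)"
    unfolding W_def hcube_eq_UN_trimmed_cube by blast
  also have "exp_moment \<alpha> (\<Union>k. W k) = (SUP k. exp_moment \<alpha> (W k))"
  proof (rule exp_moment_SUP[OF \<alpha>])
    show "incseq W"
      using incseq_trimmed_cube unfolding W_def incseq_def
      by (intro allI impI UN_mono order_refl) blast
    show "W k \<in> sets borel" for k
      unfolding W_def using G(1) by (intro sets.finite_UN) auto
    show "compact (\<Union>z\<in>G. cube b (b *\<^sub>R z))"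
      using G(1) by (intro compact_UN) auto
    show "W k \<subseteq> (\<Union>z\<in>G. cube b (b *\<^sub>R z))" for k
      unfolding W_def by (intro UN_mono order_refl trimmed_cube_subset_cube) simp
  qed
  also have "\<dots> \<le> exp_moment \<alpha> (cube b 0) ^ card G"
  proof (rule SUP_least)
    fix k
    have "exp_moment \<alpha> (W k) = (\<Prod>z\<in>G. exp_moment \<alpha> (trimmed_cube b (1 / Suc k) (b *\<^sub>R z)))"
      unfolding W_def using b G par
      by (intro exp_moment_UN[OF dep _ _ G(1), where \<delta> = "b + 1 / Suc k"])
        (auto intro: dist_trimmed_cubes)
    also have "\<dots> \<le> (\<Prod>z\<in>G. exp_moment \<alpha> (cube b 0))"
    proof (rule prod_mono_ennreal)
      fix z
      have "exp_moment \<alpha> (trimmed_cube b (1 / Suc k) (b *\<^sub>R z)) \<le> exp_moment \<alpha> (cube b (b *\<^sub>R z))"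
        by (intro exp_moment_mono \<alpha> trimmed_cube_in_borel compact_cube trimmed_cube_subset_cube) simp
      also have "\<dots> = exp_moment \<alpha> (cube b 0)"
        by (rule exp_moment_cube[OF stat])
      finally show "exp_moment \<alpha> (trimmed_cube b (1 / Suc k) (b *\<^sub>R z)) \<le> exp_moment \<alpha> (cube b 0)" .
    qed
    finally show "exp_moment \<alpha> (W k) \<le> exp_moment \<alpha> (cube b 0) ^ card G"
      by simp
  qed
  finally show ?thesis .
qed

lemma measure_Lam_le_sum_parity_classes:
  assumes "\<omega> \<in> space M" "0 < b" "compact A"
  shows "measure (Lam \<omega>) A \<le> (\<Sum>p\<in>Basis \<rightarrow>\<^sub>E UNIV.
    measure (Lam \<omega>) (\<Union>z\<in>{z \<in> lattice_cover b A. lattice_parity z = p}. hcube b (b *\<^sub>R z)))"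
proof -
  let ?S = "lattice_cover b A"
  let ?H = "\<lambda>p. \<Union>z\<in>{z \<in> ?S. lattice_parity z = p}. hcube b (b *\<^sub>R z)"
  have S: "finite ?S"
    using assms(3,2) by (rule finite_lattice_cover)
  have "A \<subseteq> (\<Union>z\<in>?S. hcube b (b *\<^sub>R z))"
    using assms(2) by (rule subset_UN_lattice_cover)
  also have "\<dots> \<subseteq> (\<Union>p\<in>Basis \<rightarrow>\<^sub>E UNIV. ?H p)"
  proof (intro UN_least)
    fix z assume "z \<in> ?S"
    moreover have "lattice_parity z \<in> Basis \<rightarrow>\<^sub>E UNIV"
      by (simp add: lattice_parity_def)
    ultimately show "hcube b (b *\<^sub>R z) \<subseteq> (\<Union>p\<in>Basis \<rightarrow>\<^sub>E UNIV. ?H p)"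
      by blast
  qed
  finally have cover: "A \<subseteq> (\<Union>p\<in>Basis \<rightarrow>\<^sub>E UNIV. ?H p)" .
  have "?H p \<subseteq> (\<Union>z\<in>?S. cube b (b *\<^sub>R z))" for p
    using hcube_subset_cube by blast
  moreover have "compact (\<Union>z\<in>?S. cube b (b *\<^sub>R z))"
    using S by (intro compact_UN) auto
  moreover have "?H p \<in> sets borel" for p
    using S by (intro sets.finite_UN) auto
  ultimately show ?thesis
    using assms(1) cover borel_compact[OF assms(3)]
    by (intro measure_Lam_le_sum[where K = "\<Union>z\<in>?S. cube b (b *\<^sub>R z)"]) (auto intro: finite_PiE)
qed

lemma Chernoff_ineq_lattice_class:
  assumes stat: "stationary_rm M Lam" and dep: "b_dependent M Lam b" and b: "0 < b" and \<alpha>: "0 < \<alpha>"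
    and G: "finite G" "G \<subseteq> lattice" and par: "\<And>z. z \<in> G \<Longrightarrow> lattice_parity z = p"
  shows "emeasure M {\<omega> \<in> space M. t \<le> measure (Lam \<omega>) (\<Union>z\<in>G. hcube b (b *\<^sub>R z))}
    \<le> ennreal (exp (- \<alpha> * t)) * exp_moment \<alpha> (cube b 0) ^ card G"
proof -
  have "(\<Union>z\<in>G. hcube b (b *\<^sub>R z)) \<in> sets borel"
    using G(1) by (intro sets.finite_UN) auto
  with \<alpha> have "emeasure M {\<omega> \<in> space M. t \<le> measure (Lam \<omega>) (\<Union>z\<in>G. hcube b (b *\<^sub>R z))}
      \<le> ennreal (exp (- \<alpha> * t)) * exp_moment \<alpha> (\<Union>z\<in>G. hcube b (b *\<^sub>R z))"
    by (rule Chernoff_ineq_measure_Lam_ge)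
  also have "\<dots> \<le> ennreal (exp (- \<alpha> * t)) * exp_moment \<alpha> (cube b 0) ^ card G"
    using \<alpha> G par by (intro mult_left_mono exp_moment_lattice_class[OF stat dep b]) auto
  finally show ?thesis .
qed

lemma emeasure_measure_Lam_ge_le:
  assumes stat: "stationary_rm M Lam" and dep: "b_dependent M Lam b" and b: "0 < b" and \<alpha>: "0 < \<alpha>"
    and A: "compact A"
  shows "emeasure M {\<omega> \<in> space M. L \<le> measure (Lam \<omega>) A}
    \<le> 2 ^ DIM('a) * ennreal (exp (- \<alpha> * (L / 2 ^ DIM('a)))) * exp_moment \<alpha> (cube b 0) ^ card (lattice_cover b A)"
proof -
  define S where "S = lattice_cover b A"
  define P :: "('a \<Rightarrow> bool) set" where "P = Basis \<rightarrow>\<^sub>E UNIV"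
  define H where "H p = (\<Union>z\<in>{z \<in> S. lattice_parity z = p}. hcube b (b *\<^sub>R z))" for p
  have S: "finite S" "S \<subseteq> lattice"
    using finite_lattice_cover[OF A b] by (auto simp: S_def lattice_cover_def)
  have P: "finite P" "card P = 2 ^ DIM('a)"
    unfolding P_def by (auto intro: finite_PiE simp: card_PiE)
  have "(\<lambda>\<omega>. measure (Lam \<omega>) (H p)) \<in> borel_measurable M" for p
    unfolding H_def using S(1) by (intro borel_measurable_measure_Lam sets.finite_UN) auto
  then have "emeasure M {\<omega> \<in> space M. L \<le> measure (Lam \<omega>) A}
      \<le> (\<Sum>p\<in>P. emeasure M {\<omega> \<in> space M. L / card P \<le> measure (Lam \<omega>) (H p)})"
    using P measure_Lam_le_sum_parity_classes[OF _ b A]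
    by (intro emeasure_le_sum_pigeonhole) (auto simp: P_def H_def S_def)
  also have "\<dots> \<le> (\<Sum>p\<in>P. ennreal (exp (- \<alpha> * (L / card P))) * exp_moment \<alpha> (cube b 0) ^ card S)"
  proof (rule sum_mono)
    fix p
    have "emeasure M {\<omega> \<in> space M. L / card P \<le> measure (Lam \<omega>) (H p)}
        \<le> ennreal (exp (- \<alpha> * (L / card P))) * exp_moment \<alpha> (cube b 0) ^ card {z \<in> S. lattice_parity z = p}"
      unfolding H_def using S by (intro Chernoff_ineq_lattice_class[OF stat dep b \<alpha>]) auto
    also have "\<dots> \<le> ennreal (exp (- \<alpha> * (L / card P))) * exp_moment \<alpha> (cube b 0) ^ card S"
      using S(1) \<alpha> by (intro mult_left_mono power_increasing card_mono one_le_exp_moment) auto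
    finally show "emeasure M {\<omega> \<in> space M. L / card P \<le> measure (Lam \<omega>) (H p)}
        \<le> ennreal (exp (- \<alpha> * (L / card P))) * exp_moment \<alpha> (cube b 0) ^ card S" .
  qed
  also have "\<dots> = 2 ^ DIM('a) * ennreal (exp (- \<alpha> * (L / 2 ^ DIM('a)))) * exp_moment \<alpha> (cube b 0) ^ card S"
    using P by (simp add: mult.assoc)
  finally show ?thesis
    unfolding S_def .
qed

end

theorem mainTheorem12:
  fixes M :: "'w measure" and Lam :: "'w \<Rightarrow> 'a::euclidean_space measure"
    and b \<alpha> L :: real and A :: "'a set"
  assumes rm: "random_measure M Lam"
    and stat: "stationary_rm M Lam"
    and bpos: "b > 0"
    and dep: "b_dependent M Lam b"
    and mom: "\<And>\<beta>. \<beta> > 0 \<Longrightarrow>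
       (\<integral>\<^sup>+ \<omega>. ennreal (exp (\<beta> * measure (Lam \<omega>) (cube 1 0))) \<partial>M) < \<infinity>"
    and A: "compact A"
    and \<alpha>: "\<alpha> > 0"
    and L: "L > 0"
  shows "measure M {\<omega> \<in> space M. measure (Lam \<omega>) A \<ge> L}
     \<le> exp (real (card {z \<in> lattice. cube b (b *\<^sub>R z) \<inter> A \<noteq> {}})
              * ln (integral\<^sup>L M (\<lambda>\<omega>. exp (\<alpha> * measure (Lam \<omega>) (cube b 0))))
            - \<alpha> * L / 2 ^ DIM('a) + real DIM('a) * ln 2)"
proof -
  have "prob_space M"
    using rm by (simp add: random_measure_def)
  then interpret random_measure_on M Lam
    using rm by (simp add: random_measure_on_def random_measure_on_axioms_def)
  define n where "n = card (lattice_cover b A)"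
  define E where "E = (\<integral>\<omega>. exp (\<alpha> * measure (Lam \<omega>) (cube b 0)) \<partial>M)"
  have E: "exp_moment \<alpha> (cube b 0) = ennreal E"
    unfolding E_def
    using exp_moment_finite[OF stat mom[folded exp_moment_def] compact_cube \<alpha>]
    by (intro exp_moment_eq_integral) auto
  then have E1: "1 \<le> E"
    using one_le_exp_moment[of \<alpha> "cube b 0"] \<alpha> by simp
  have "emeasure M {\<omega> \<in> space M. L \<le> measure (Lam \<omega>) A}
      \<le> ennreal (2 ^ DIM('a) * exp (- (\<alpha> * L / 2 ^ DIM('a))) * E ^ n)"
  proof -
    have "ennreal (2 ^ DIM('a)) = 2 ^ DIM('a)"
      by (simp flip: ennreal_power)
    with emeasure_measure_Lam_ge_le[OF stat dep bpos \<alpha> A, of L] E E1 show ?thesis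
      by (simp add: n_def ennreal_mult ennreal_power)
  qed
  then have "measure M {\<omega> \<in> space M. L \<le> measure (Lam \<omega>) A} \<le> 2 ^ DIM('a) * exp (- (\<alpha> * L / 2 ^ DIM('a))) * E ^ n"
    unfolding measure_def by (rule enn2real_leI[rotated]) (use E1 in simp)
  also have "\<dots> = exp (real n * ln E - \<alpha> * L / 2 ^ DIM('a) + real DIM('a) * ln 2)"
    using E1 by (intro mult_exp_power_eq_exp_ln) simp
  finally show ?thesis
    unfolding n_def lattice_cover_def E_def .
qed

end
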